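(* Assume (A1)–(A3). At iteration $\ell$ of the Adaptive Trajectory Bundle Method, let $(\alpha^*,s^*,w^*,\{d_j^*\})$ be an optimal solution of the subproblem (P) built from the sample set $\mathcal Y^\ell$ with penalties $(\mu^\ell,\boldsymbol\gamma^\ell)$, let $J_{\rm sub}^*$ be its optimal value and $z^+=\{(W_x^{(k)}\alpha^{(k)*},W_u^{(k)}\alpha^{(k)*})\}_{k=1}^H$ the recovered trajectory. Then, with $C_{\rm approx}=2$, $$\big|\phi_{\mu^\ell,\boldsymbol\gamma^\ell}(z^+)-J_{\rm sub}^*\big|\le C_{\rm approx}\,L_\phi(\mu^\ell,\boldsymbol\gamma^\ell)\,\Delta^\ell,$$ where $L_\phi(\mu,\boldsymbol\gamma)=2HRL_r+(H-1)\mu(1+L_F+L_c)+(H-1)L_c\sum_{j=1}^J\gamma_j$.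
   Context: Fix integers $H\ge 2$, $n_x,n_u,n_r,n_{\rm hard}\ge 1$, $J\ge 0$, $n_1,\dots,n_J\ge1$, $m\ge1$. A trajectory is $z=\{(x_k,u_k)\}_{k=1}^H$, $x_k\in\mathbb R^{n_x}$, $u_k\in\mathbb R^{n_u}$, with norm $\|z\|=(\sum_k\|x_k\|^2+\|u_k\|^2)^{1/2}$; $B(z,\Delta)$ is the closed ball. Given maps $F:\mathbb R^{n_x}\times\mathbb R^{n_u}\to\mathbb R^{n_x}$, $r_k\to\mathbb R^{n_r}$, $c_{{\rm hard},k}\to\mathbb R^{n_{\rm hard}}$, $c_{j,k}\to\mathbb R^{n_j}$ ($k=1,\dots,H$, $j=1,\dots,J$), constraints meaning $c\ge0$; $c_k=(c_{{\rm hard},k},c_{1,k},\dots,c_{J,k})$. $[v]_-=\max(0,-v)$, $[v]_+=\max(0,v)$ elementwise; $\Delta^{m-1}$ is the probability simplex in $\mathbb R^m$. Penalized objective: $\phi_{\mu,\boldsymbol\gamma}(z)=\sum_{k=1}^H\|r_k(x_k,u_k)\|_2^2+\mu\sum_{k=1}^{H-1}\big(\|x_{k+1}-F(x_k,u_k)\|_1+\|[c_{{\rm hard},k}(x_k,u_k)]_-\|_1\big)+\sum_{j=1}^J\gamma_j\sum_{k=1}^{H-1}\|[c_{j,k}(x_k,u_k)]_-\|_1$. Subproblem (P): given sample trajectories $y_i=\{(x_i^{(k)},u_i^{(k)})\}_{k=1}^H$, $i=1,\dots,m$, set $W_x^{(k)}=[x_1^{(k)}\cdots x_m^{(k)}]$,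 $W_u^{(k)}=[u_1^{(k)}\cdots u_m^{(k)}]$, $W_f^{(k)}=[F(x_i^{(k)},u_i^{(k)})]_i$, $W_r^{(k)}=[r_k(x_i^{(k)},u_i^{(k)})]_i$, $W_{c,{\rm hard}}^{(k)}=[c_{{\rm hard},k}(x_i^{(k)},u_i^{(k)})]_i$, $W_{c,j}^{(k)}=[c_{j,k}(x_i^{(k)},u_i^{(k)})]_i$. (P) minimizes $J_{\rm sub}=\sum_{k=1}^H\|W_r^{(k)}\alpha^{(k)}\|_2^2+\mu\sum_{k=1}^{H-1}(\|s_k\|_1+\|w_k\|_1)+\sum_j\gamma_j\sum_{k=1}^{H-1}\|d_{k,j}\|_1$ over $\alpha^{(k)}\in\Delta^{m-1}$ ($k=1..H$), $s_k\in\mathbb R^{n_x}$, $w_k\ge0$, $d_{k,j}\ge0$ ($k=1..H-1$) subject to $W_f^{(k)}\alpha^{(k)}=W_x^{(k+1)}\alpha^{(k+1)}+s_k$, $W_{c,{\rm hard}}^{(k)}\alpha^{(k)}+w_k\ge0$, $W_{c,j}^{(k)}\alpha^{(k)}+d_{k,j}\ge0$. Adaptive Trajectory Bundle Method: starting from $z^0$, $\Delta^0,\mu^0,\boldsymbol\gamma^0>0$, at iteration $\ell$ choose samples $\mathcal Y^\ell=\{y_1,\dots,y_m\}\subset B(z^\ell,\Delta^\ell)$, solve (P) with $(\mu^\ell,\boldsymbol\gamma^\ell)$, and set $z^{\ell+1}=\{(W_x^{(k)}\alpha^{(k)*},W_u^{(k)}\alpha^{(k)*})\}_k$ (always accepted);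 violation metrics $\nu_{\rm dyn}^\ell=\max_{k\le H-1}\|s_k^*\|_\infty$, $\nu_{\rm hard}^\ell=\max_{k\le H-1}\|w_k^*\|_\infty$, $\nu_j^\ell=\sum_{k=1}^{H-1}\|d_{k,j}^*\|_1$; then $\Delta^{\ell+1}=\min(\beta_{\exp}\Delta^\ell,\Delta_{\max})$ if $\nu_{\rm dyn}^\ell<\tau_{\rm feas}$ and $\nu_{\rm hard}^\ell<\tau_{\rm feas}$, $\Delta^{\ell+1}=\max(\beta_{\rm con}\Delta^\ell,\Delta_{\min})$ if $\nu_{\rm dyn}^\ell>\tau_{\rm viol}$ or $\nu_{\rm hard}^\ell>\tau_{\rm viol}$, else $\Delta^{\ell+1}=\Delta^\ell$; $\mu^{\ell+1}=\min(\rho_\mu\mu^\ell,\mu_{\max})$ if $\nu_{\rm dyn}^\ell>\tau_{\rm viol}$ or $\nu_{\rm hard}^\ell>\tau_{\rm viol}$, else $\mu^\ell$; $\gamma_j^{\ell+1}=\min(\rho_\gamma\gamma_j^\ell,\gamma_{j,\max})$ if $\nu_j^\ell>\tau_j$, else $\gamma_j^\ell$. Parameters: $\beta_{\exp}>1>\beta_{\rm con}>0$, $0<\Delta_{\min}\le\Delta_{\max}$, $0<\tau_{\rm feas}<\tau_{\rm viol}$, $\tau_j>0$, $\rho_\mu,\rho_\gamma>1$. (A1) $r_k,F,c_k$ Lipschitz with constants $L_r,L_F,L_c$. (A2) For all $\mu\le\mu_{\max},\gamma_j\le\gamma_{j,\max}$ the level set $\mathcal L(\mu,\boldsymbol\gamma)=\{z:\phi_{\mu,\boldsymbol\gamma}(z)\le\phi_{\mu,\boldsymbol\gamma}(z^0)\}$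 is compact and $\|r_k(x_k,u_k)\|\le R$ on it for all $k$ (this bound $R$ is used for all residuals evaluated in the analysis). (A3) Each $\mathcal Y^\ell$ satisfies: (i) $y_i\in B(z^\ell,\Delta^\ell)$ for all $i$; (ii) $z^\ell\in\mathcal Y^\ell$; (iii) there is $\kappa>0$ independent of $\ell$ such that for every unit direction $d$ some $y_i$ has $\langle y_i-z^\ell,d\rangle\ge\kappa\Delta^\ell$. *)

theory Defs
  imports "HOL-Analysis.Analysis"
begin

text \<open>Stage states (x_k,u_k) live in real^'nx \<times> real^'nu, whose norm is
 sqrt(|x|^2+|u|^2).  A trajectory is a map z :: nat \<Rightarrow> stage, only the
 indices k = 1..H are relevant.  Soft-constraint family j has dimension nj j and
 its values are represented as nat \<Rightarrow> real, components 0..nj j - 1.\<close>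

type_synonym ('nx,'nu) stage = "(real^('nx::finite)) \<times> (real^('nu::finite))"
type_synonym ('nx,'nu) traj = "nat \<Rightarrow> ('nx,'nu) stage"

definition l1 :: "real^('n::finite) \<Rightarrow> real" where
  "l1 v = (\<Sum>i\<in>UNIV. \<bar>v $ i\<bar>)"

definition linf :: "real^('n::finite) \<Rightarrow> real" where
  "linf v = Max ((\<lambda>i. \<bar>v $ i\<bar>) ` UNIV)"

definition negl1 :: "real^('n::finite) \<Rightarrow> real" where
  "negl1 v = (\<Sum>i\<in>UNIV. max 0 (- (v $ i)))"

definition traj_norm :: "nat \<Rightarrow> ('nx::finite,'nu::finite) traj \<Rightarrow> real" where
  "traj_norm H z = sqrt (\<Sum>k=1..H. (norm (z k))\<^sup>2)"

definition traj_inner :: "nat \<Rightarrow> ('nx::finite,'nu::finite) traj \<Rightarrow> ('nx,'nu) traj \<Rightarrow> real" where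
  "traj_inner H z y = (\<Sum>k=1..H. inner (z k) (y k))"

definition phi ::
  "nat \<Rightarrow> nat \<Rightarrow> (nat \<Rightarrow> nat)
   \<Rightarrow> (('nx::finite,'nu::finite) stage \<Rightarrow> real^'nx)
   \<Rightarrow> (nat \<Rightarrow> ('nx,'nu) stage \<Rightarrow> real^('nr::finite))
   \<Rightarrow> (nat \<Rightarrow> ('nx,'nu) stage \<Rightarrow> real^('nh::finite))
   \<Rightarrow> (nat \<Rightarrow> nat \<Rightarrow> ('nx,'nu) stage \<Rightarrow> (nat \<Rightarrow> real))
   \<Rightarrow> real \<Rightarrow> (nat \<Rightarrow> real) \<Rightarrow> ('nx,'nu) traj \<Rightarrow> real" where
  "phi H J nj F r ch cj \<mu> \<gamma> z =
     (\<Sum>k=1..H. (norm (r k (z k)))\<^sup>2)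
     + \<mu> * (\<Sum>k=1..H-1. l1 (fst (z (k+1)) - F (z k)) + negl1 (ch k (z k)))
     + (\<Sum>j=1..J. \<gamma> j * (\<Sum>k=1..H-1. \<Sum>l<nj j. max 0 (- cj j k (z k) l)))"

text \<open>Subproblem (P).  Samples Y i (i = 1..m), weights \<alpha> k i (stage k, sample i),
  slacks s k, w k, d k j l.\<close>
definition sub_feasible ::
  "nat \<Rightarrow> nat \<Rightarrow> nat \<Rightarrow> (nat \<Rightarrow> nat)
   \<Rightarrow> (('nx::finite,'nu::finite) stage \<Rightarrow> real^'nx)
   \<Rightarrow> (nat \<Rightarrow> ('nx,'nu) stage \<Rightarrow> real^('nh::finite))
   \<Rightarrow> (nat \<Rightarrow> nat \<Rightarrow> ('nx,'nu) stage \<Rightarrow> (nat \<Rightarrow> real))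
   \<Rightarrow> (nat \<Rightarrow> ('nx,'nu) traj)
   \<Rightarrow> (nat \<Rightarrow> nat \<Rightarrow> real) \<Rightarrow> (nat \<Rightarrow> real^'nx) \<Rightarrow> (nat \<Rightarrow> real^'nh)
   \<Rightarrow> (nat \<Rightarrow> nat \<Rightarrow> nat \<Rightarrow> real) \<Rightarrow> bool" where
  "sub_feasible H m J nj F ch cj Y \<alpha> s w d \<longleftrightarrow>
     (\<forall>k\<in>{1..H}. (\<forall>i\<in>{1..m}. 0 \<le> \<alpha> k i) \<and> (\<Sum>i=1..m. \<alpha> k i) = 1) \<and>
     (\<forall>k\<in>{1..H-1}. (\<Sum>i=1..m. \<alpha> k i *\<^sub>R F (Y i k))
                      = (\<Sum>i=1..m. \<alpha> (k+1) i *\<^sub>R fst (Y i (k+1))) + s k) \<and>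
     (\<forall>k\<in>{1..H-1}. \<forall>l. 0 \<le> w k $ l \<and>
                      0 \<le> (\<Sum>i=1..m. \<alpha> k i *\<^sub>R ch k (Y i k)) $ l + w k $ l) \<and>
     (\<forall>k\<in>{1..H-1}. \<forall>j\<in>{1..J}. \<forall>l<nj j. 0 \<le> d k j l \<and>
                      0 \<le> (\<Sum>i=1..m. \<alpha> k i * cj j k (Y i k) l) + d k j l)"

definition sub_obj ::
  "nat \<Rightarrow> nat \<Rightarrow> nat \<Rightarrow> (nat \<Rightarrow> nat)
   \<Rightarrow> (nat \<Rightarrow> ('nx::finite,'nu::finite) stage \<Rightarrow> real^('nr::finite))
   \<Rightarrow> real \<Rightarrow> (nat \<Rightarrow> real) \<Rightarrow> (nat \<Rightarrow> ('nx,'nu) traj)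
   \<Rightarrow> (nat \<Rightarrow> nat \<Rightarrow> real) \<Rightarrow> (nat \<Rightarrow> real^'nx) \<Rightarrow> (nat \<Rightarrow> real^('nh::finite))
   \<Rightarrow> (nat \<Rightarrow> nat \<Rightarrow> nat \<Rightarrow> real) \<Rightarrow> real" where
  "sub_obj H m J nj r \<mu> \<gamma> Y \<alpha> s w d =
     (\<Sum>k=1..H. (norm (\<Sum>i=1..m. \<alpha> k i *\<^sub>R r k (Y i k)))\<^sup>2)
     + \<mu> * (\<Sum>k=1..H-1. l1 (s k) + l1 (w k))
     + (\<Sum>j=1..J. \<gamma> j * (\<Sum>k=1..H-1. \<Sum>l<nj j. \<bar>d k j l\<bar>))"

definition sub_optimal where
  "sub_optimal H m J nj F r ch cj \<mu> \<gamma> Y \<alpha> s w d \<longleftrightarrow>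
     sub_feasible H m J nj F ch cj Y \<alpha> s w d \<and>
     (\<forall>\<alpha>' s' w' d'. sub_feasible H m J nj F ch cj Y \<alpha>' s' w' d' \<longrightarrow>
        sub_obj H m J nj r \<mu> \<gamma> Y \<alpha> s w d \<le> sub_obj H m J nj r \<mu> \<gamma> Y \<alpha>' s' w' d')"

definition recover :: "nat \<Rightarrow> (nat \<Rightarrow> ('nx::finite,'nu::finite) traj) \<Rightarrow> (nat \<Rightarrow> nat \<Rightarrow> real) \<Rightarrow> ('nx,'nu) traj" where
  "recover m Y \<alpha> = (\<lambda>k. \<Sum>i=1..m. \<alpha> k i *\<^sub>R Y i k)"

definition nu_dyn :: "nat \<Rightarrow> (nat \<Rightarrow> real^('nx::finite)) \<Rightarrow> real" where
  "nu_dyn H s = Max ((\<lambda>k. linf (s k)) ` {1..H-1})"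
definition nu_hard :: "nat \<Rightarrow> (nat \<Rightarrow> real^('nh::finite)) \<Rightarrow> real" where
  "nu_hard H w = Max ((\<lambda>k. linf (w k)) ` {1..H-1})"
definition nu_soft :: "nat \<Rightarrow> (nat \<Rightarrow> nat) \<Rightarrow> (nat \<Rightarrow> nat \<Rightarrow> nat \<Rightarrow> real) \<Rightarrow> nat \<Rightarrow> real" where
  "nu_soft H nj d j = (\<Sum>k=1..H-1. \<Sum>l<nj j. \<bar>d k j l\<bar>)"

definition atbm_run where
  "atbm_run H m J nj F r ch cj z0 \<Delta>0 \<mu>0 \<gamma>0
     \<beta>exp \<beta>con \<Delta>min \<Delta>max \<tau>feas \<tau>viol \<tau> \<rho>\<mu> \<rho>\<gamma> \<mu>max \<gamma>max
     zs \<Delta>s \<mu>s \<gamma>s Ys \<alpha>s ss ws ds \<longleftrightarrow>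
   zs 0 = z0 \<and> \<Delta>s 0 = \<Delta>0 \<and> \<mu>s 0 = \<mu>0 \<and> \<gamma>s 0 = \<gamma>0 \<and>
   (\<forall>t.
     sub_optimal H m J nj F r ch cj (\<mu>s t) (\<gamma>s t) (Ys t) (\<alpha>s t) (ss t) (ws t) (ds t) \<and>
     zs (Suc t) = recover m (Ys t) (\<alpha>s t) \<and>
     (let nd = nu_dyn H (ss t); nh = nu_hard H (ws t) in
       \<Delta>s (Suc t) =
         (if nd < \<tau>feas \<and> nh < \<tau>feas then min (\<beta>exp * \<Delta>s t) \<Delta>max
          else if \<tau>viol < nd \<or> \<tau>viol < nh then max (\<beta>con * \<Delta>s t) \<Delta>min
          else \<Delta>s t) \<and>
       \<mu>s (Suc t) =
         (if \<tau>viol < nd \<or> \<tau>viol < nh then min (\<rho>\<mu> * \<mu>s t) \<mu>max else \<mu>s t)) \<and>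
     (\<forall>j\<in>{1..J}. \<gamma>s (Suc t) j =
         (if \<tau> j < nu_soft H nj (ds t) j then min (\<rho>\<gamma> * \<gamma>s t j) (\<gamma>max j)
          else \<gamma>s t j)))"

end

theory Submission
  imports Defs
begin

text \<open>Stage by stage, the recovered trajectory z+ is the convex combination of the
  samples with weights \<alpha>. All samples lie in the ball of radius \<Delta> around the current
  iterate, hence so does z+, and every sample is within 2\<Delta> of z+. At an optimum of (P)
  the penalties are nonnegative and the slacks w, d are the negative parts of the
  interpolated constraint values, while s is the defect of the interpolated dynamics; so
  the optimal value is \<phi> with each map g evaluated as the convex combination of the
  values g(y i) instead of as g(z+). For g Lipschitz with respect to a sublinear
  functional (the Euclidean or the l1 norm) the two evaluations differ by at most the
  Lipschitz constant times 2\<Delta>; the squared residuals pick up the extra factor 2R from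
  a^2 - b^2 = (a - b)(a + b).\<close>

lemma l1_add_le: "l1 (a + b) \<le> l1 a + l1 b"
  unfolding l1_def by (simp add: sum.distrib[symmetric] sum_mono abs_triangle_ineq)

lemma l1_scaleR: "l1 (c *\<^sub>R a) = \<bar>c\<bar> * l1 a"
  unfolding l1_def by (simp add: sum_distrib_left abs_mult)

lemma l1_nonneg: "0 \<le> l1 a"
  unfolding l1_def by (simp add: sum_nonneg)

lemma l1_minus_commute: "l1 (a - b) = l1 (b - a)"
  unfolding l1_def by (simp add: abs_minus_commute)

lemma abs_l1_diff_le: "\<bar>l1 a - l1 b\<bar> \<le> l1 (a - b)"
  using l1_add_le[of "a - b" b] l1_add_le[of "b - a" a] l1_minus_commute[of a b] by simp

lemma abs_negl1_diff_le: "\<bar>negl1 a - negl1 b\<bar> \<le> l1 (a - b)"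
proof -
  have "\<bar>negl1 a - negl1 b\<bar> = \<bar>\<Sum>i\<in>UNIV. max 0 (- a $ i) - max 0 (- b $ i)\<bar>"
    unfolding negl1_def by (simp add: sum_subtractf)
  also have "\<dots> \<le> (\<Sum>i\<in>UNIV. \<bar>(a - b) $ i\<bar>)"
    by (rule order.trans[OF sum_abs sum_mono]) auto
  finally show ?thesis unfolding l1_def .
qed

definition sublinear :: "('a::real_vector \<Rightarrow> real) \<Rightarrow> bool" where
  "sublinear N \<longleftrightarrow> (\<forall>x y. N (x + y) \<le> N x + N y) \<and> (\<forall>c x. 0 \<le> c \<longrightarrow> N (c *\<^sub>R x) = c * N x)"

lemma sublinear_norm: "sublinear norm"
  unfolding sublinear_def by (simp add: norm_triangle_ineq)

lemma sublinear_l1: "sublinear l1"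
  unfolding sublinear_def by (simp add: l1_add_le l1_scaleR)

lemma sublinear_sum_le:
  assumes N: "sublinear N" and "finite A" and "\<forall>i\<in>A. 0 \<le> \<alpha> i"
  shows "N (\<Sum>i\<in>A. \<alpha> i *\<^sub>R v i) \<le> (\<Sum>i\<in>A. \<alpha> i * N (v i))"
  using \<open>finite A\<close> \<open>\<forall>i\<in>A. 0 \<le> \<alpha> i\<close>
proof (induction A rule: finite_induct)
  case empty
  have "N 0 = 0"
    using N unfolding sublinear_def by (metis order_refl mult_zero_left scaleR_zero_left)
  then show ?case by simp
next
  case (insert i A)
  have "N (\<Sum>i\<in>insert i A. \<alpha> i *\<^sub>R v i) \<le> N (\<alpha> i *\<^sub>R v i) + N (\<Sum>i\<in>A. \<alpha> i *\<^sub>R v i)"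
    using N insert.hyps unfolding sublinear_def by simp
  also have "\<dots> \<le> \<alpha> i * N (v i) + (\<Sum>i\<in>A. \<alpha> i * N (v i))"
    using N insert unfolding sublinear_def by simp
  finally show ?case using insert.hyps by simp
qed

lemma sublinear_convex_comb_deviation_le:
  assumes N: "sublinear N" and A: "finite A" "\<forall>i\<in>A. 0 \<le> \<alpha> i" "sum \<alpha> A = 1"
    and B: "\<forall>i\<in>A. N (v - u i) \<le> B"
  shows "N (v - (\<Sum>i\<in>A. \<alpha> i *\<^sub>R u i)) \<le> B"
proof -
  have "v - (\<Sum>i\<in>A. \<alpha> i *\<^sub>R u i) = (\<Sum>i\<in>A. \<alpha> i *\<^sub>R (v - u i))"
    using A(3) by (simp add: scaleR_diff_right sum_subtractf scaleR_sum_left[symmetric])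
  then have "N (v - (\<Sum>i\<in>A. \<alpha> i *\<^sub>R u i)) \<le> (\<Sum>i\<in>A. \<alpha> i * N (v - u i))"
    using sublinear_sum_le[OF N A(1,2)] by simp
  also have "\<dots> \<le> (\<Sum>i\<in>A. \<alpha> i * B)"
    using A(2) B by (intro sum_mono mult_left_mono) auto
  also have "\<dots> = B"
    using A(3) by (simp add: sum_distrib_right[symmetric])
  finally show ?thesis .
qed

lemma sum_abs_deviation_convex_comb_le:
  fixes x :: "'l \<Rightarrow> real"
  assumes A: "finite A" "\<forall>i\<in>A. 0 \<le> \<alpha> i" "sum \<alpha> A = 1"
    and B: "\<forall>i\<in>A. (\<Sum>l\<in>L. \<bar>x l - y i l\<bar>) \<le> B"
  shows "(\<Sum>l\<in>L. \<bar>x l - (\<Sum>i\<in>A. \<alpha> i * y i l)\<bar>) \<le> B"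
proof -
  have "(\<Sum>l\<in>L. \<bar>x l - (\<Sum>i\<in>A. \<alpha> i * y i l)\<bar>) \<le> (\<Sum>l\<in>L. \<Sum>i\<in>A. \<alpha> i * \<bar>x l - y i l\<bar>)"
  proof (rule sum_mono)
    fix l
    have "x l - (\<Sum>i\<in>A. \<alpha> i * y i l) = (\<Sum>i\<in>A. \<alpha> i * (x l - y i l))"
      using A(3) by (simp add: right_diff_distrib sum_subtractf sum_distrib_right[symmetric])
    then show "\<bar>x l - (\<Sum>i\<in>A. \<alpha> i * y i l)\<bar> \<le> (\<Sum>i\<in>A. \<alpha> i * \<bar>x l - y i l\<bar>)"
      using A(2) by (simp add: order.trans[OF sum_abs] abs_mult)
  qed
  also have "\<dots> = (\<Sum>i\<in>A. \<alpha> i * (\<Sum>l\<in>L. \<bar>x l - y i l\<bar>))"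
    by (simp add: sum.swap[of _ L] sum_distrib_left)
  also have "\<dots> \<le> (\<Sum>i\<in>A. \<alpha> i * B)"
    using A(2) B by (intro sum_mono mult_left_mono) auto
  also have "\<dots> = B"
    using A(3) by (simp add: sum_distrib_right[symmetric])
  finally show ?thesis .
qed

lemma abs_power2_norm_diff_le:
  fixes a b :: "'a::real_normed_vector"
  assumes "norm a \<le> R" "norm b \<le> R"
  shows "\<bar>(norm a)\<^sup>2 - (norm b)\<^sup>2\<bar> \<le> 2 * R * norm (a - b)"
proof -
  have "(norm a)\<^sup>2 - (norm b)\<^sup>2 = (norm a - norm b) * (norm a + norm b)"
    by (simp add: power2_eq_square algebra_simps)
  then have "\<bar>(norm a)\<^sup>2 - (norm b)\<^sup>2\<bar> = \<bar>norm a - norm b\<bar> * (norm a + norm b)"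
    by (simp add: abs_mult)
  also have "\<dots> \<le> norm (a - b) * (2 * R)"
    using assms by (intro mult_mono norm_triangle_ineq3) auto
  finally show ?thesis by (simp add: mult_ac)
qed

lemma abs_power2_norm_convex_comb_le:
  fixes v :: "'a::real_normed_vector"
  assumes A: "finite A" "\<forall>i\<in>A. 0 \<le> \<alpha> i" "sum \<alpha> A = 1"
    and R: "norm v \<le> R" "\<forall>i\<in>A. norm (u i) \<le> R"
    and B: "\<forall>i\<in>A. norm (v - u i) \<le> B"
  shows "\<bar>(norm v)\<^sup>2 - (norm (\<Sum>i\<in>A. \<alpha> i *\<^sub>R u i))\<^sup>2\<bar> \<le> 2 * R * B"
proof -
  have "norm (0 - (\<Sum>i\<in>A. \<alpha> i *\<^sub>R u i)) \<le> R"
    using R(2) by (intro sublinear_convex_comb_deviation_le[OF sublinear_norm A]) simp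
  then have "\<bar>(norm v)\<^sup>2 - (norm (\<Sum>i\<in>A. \<alpha> i *\<^sub>R u i))\<^sup>2\<bar> \<le> 2 * R * norm (v - (\<Sum>i\<in>A. \<alpha> i *\<^sub>R u i))"
    using R(1) by (intro abs_power2_norm_diff_le) simp_all
  also have "\<dots> \<le> 2 * R * B"
    using sublinear_convex_comb_deviation_le[OF sublinear_norm A B] R(1) norm_ge_zero[of v]
    by (intro mult_left_mono) linarith+
  finally show ?thesis .
qed

lemma abs_l1_defect_convex_comb_le:
  assumes A: "finite A" "\<forall>i\<in>A. 0 \<le> \<alpha> i" "sum \<alpha> A = 1"
    and defect: "(\<Sum>i\<in>A. \<alpha> i *\<^sub>R u i) = x + s"
    and B: "\<forall>i\<in>A. l1 (v - u i) \<le> B"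
  shows "\<bar>l1 (x - v) - l1 s\<bar> \<le> B"
proof -
  have "\<bar>l1 (x - v) - l1 (- s)\<bar> \<le> l1 (x - v + s)"
    using abs_l1_diff_le[of "x - v" "- s"] by simp
  also have "\<dots> = l1 (v - (\<Sum>i\<in>A. \<alpha> i *\<^sub>R u i))"
    using l1_minus_commute[of "x + s" v] by (simp add: defect algebra_simps)
  also have "\<dots> \<le> B"
    by (rule sublinear_convex_comb_deviation_le[OF sublinear_l1 A B])
  finally show ?thesis
    unfolding l1_def by simp
qed

lemma abs_negl1_convex_comb_le:
  assumes A: "finite A" "\<forall>i\<in>A. 0 \<le> \<alpha> i" "sum \<alpha> A = 1"
    and B: "\<forall>i\<in>A. l1 (v - u i) \<le> B"
  shows "\<bar>negl1 v - negl1 (\<Sum>i\<in>A. \<alpha> i *\<^sub>R u i)\<bar> \<le> B"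
  using abs_negl1_diff_le sublinear_convex_comb_deviation_le[OF sublinear_l1 A B] by (rule order.trans)

lemma abs_sum_neg_part_convex_comb_le:
  fixes x :: "'l \<Rightarrow> real"
  assumes A: "finite A" "\<forall>i\<in>A. 0 \<le> \<alpha> i" "sum \<alpha> A = 1"
    and B: "\<forall>i\<in>A. (\<Sum>l\<in>L. \<bar>x l - y i l\<bar>) \<le> B"
  shows "\<bar>(\<Sum>l\<in>L. max 0 (- x l)) - (\<Sum>l\<in>L. max 0 (- (\<Sum>i\<in>A. \<alpha> i * y i l)))\<bar> \<le> B"
proof -
  have "\<bar>(\<Sum>l\<in>L. max 0 (- x l)) - (\<Sum>l\<in>L. max 0 (- (\<Sum>i\<in>A. \<alpha> i * y i l)))\<bar>
      \<le> (\<Sum>l\<in>L. \<bar>max 0 (- x l) - max 0 (- (\<Sum>i\<in>A. \<alpha> i * y i l))\<bar>)"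
    by (simp add: order.trans[OF _ sum_abs] flip: sum_subtractf)
  also have "\<dots> \<le> (\<Sum>l\<in>L. \<bar>x l - (\<Sum>i\<in>A. \<alpha> i * y i l)\<bar>)"
    by (rule sum_mono) linarith
  also have "\<dots> \<le> B"
    by (rule sum_abs_deviation_convex_comb_le[OF A B])
  finally show ?thesis .
qed

lemma dist_convex_comb_le:
  fixes y :: "'i \<Rightarrow> 'a::real_normed_vector"
  assumes A: "finite A" "\<forall>i\<in>A. 0 \<le> \<alpha> i" "sum \<alpha> A = 1"
    and near: "\<forall>i\<in>A. dist z (y i) \<le> \<Delta>" and "j \<in> A"
  shows "dist (\<Sum>i\<in>A. \<alpha> i *\<^sub>R y i) (y j) \<le> 2 * \<Delta>"
proof -
  have "(\<Sum>i\<in>A. \<alpha> i *\<^sub>R y i) \<in> cball z \<Delta>"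
    using A near by (intro convex_sum convex_cball) auto
  then have "dist z (\<Sum>i\<in>A. \<alpha> i *\<^sub>R y i) \<le> \<Delta>" by simp
  then show ?thesis
    using near \<open>j \<in> A\<close> dist_triangle3[of "\<Sum>i\<in>A. \<alpha> i *\<^sub>R y i" "y j" z] by auto
qed

lemma dist_le_traj_norm:
  assumes "k \<in> {1..H}"
  shows "dist (z k) (y k) \<le> traj_norm H (\<lambda>k. y k - z k)"
proof -
  have "(norm (y k - z k))\<^sup>2 \<le> (\<Sum>k=1..H. (norm (y k - z k))\<^sup>2)"
    using assms by (intro member_le_sum) auto
  then show ?thesis
    unfolding traj_norm_def by (simp add: real_le_rsqrt dist_norm norm_minus_commute)
qed

lemma abs_sum_diff_le:
  assumes "\<forall>k\<in>K. \<bar>f k - g k\<bar> \<le> e"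
  shows "\<bar>sum f K - sum g K\<bar> \<le> real (card K) * (e :: real)"
proof -
  have "\<bar>sum f K - sum g K\<bar> \<le> (\<Sum>k\<in>K. \<bar>f k - g k\<bar>)"
    by (simp add: order.trans[OF _ sum_abs] flip: sum_subtractf)
  also have "\<dots> \<le> (\<Sum>k\<in>K. e)"
    using assms by (intro sum_mono) auto
  finally show ?thesis by simp
qed

lemma abs_penalty_sum_diff_le:
  fixes \<mu> :: real
  assumes "0 \<le> \<mu>" "\<forall>j\<in>Js. 0 \<le> \<gamma> j"
    and "\<forall>k\<in>K. \<bar>a k - a' k\<bar> \<le> ea" "\<forall>k\<in>K'. \<bar>b k - b' k\<bar> \<le> eb"
    and "\<forall>j\<in>Js. \<forall>k\<in>K'. \<bar>c j k - c' j k\<bar> \<le> ec"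
  shows "\<bar>((\<Sum>k\<in>K. a k) + \<mu> * (\<Sum>k\<in>K'. b k) + (\<Sum>j\<in>Js. \<gamma> j * (\<Sum>k\<in>K'. c j k)))
          - ((\<Sum>k\<in>K. a' k) + \<mu> * (\<Sum>k\<in>K'. b' k) + (\<Sum>j\<in>Js. \<gamma> j * (\<Sum>k\<in>K'. c' j k)))\<bar>
         \<le> real (card K) * ea + \<mu> * (real (card K') * eb) + real (card K') * ec * (\<Sum>j\<in>Js. \<gamma> j)"
proof -
  have a: "\<bar>sum a K - sum a' K\<bar> \<le> real (card K) * ea"
    using assms(3) by (rule abs_sum_diff_le)
  have b: "\<bar>\<mu> * sum b K' - \<mu> * sum b' K'\<bar> \<le> \<mu> * (real (card K') * eb)"
    using abs_sum_diff_le[OF assms(4)] \<open>0 \<le> \<mu>\<close>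
    by (simp add: abs_mult mult_left_mono flip: right_diff_distrib)
  have "\<bar>(\<Sum>j\<in>Js. \<gamma> j * sum (c j) K') - (\<Sum>j\<in>Js. \<gamma> j * sum (c' j) K')\<bar>
      \<le> (\<Sum>j\<in>Js. \<bar>\<gamma> j * sum (c j) K' - \<gamma> j * sum (c' j) K'\<bar>)"
    by (simp add: order.trans[OF _ sum_abs] flip: sum_subtractf)
  also have "\<dots> \<le> (\<Sum>j\<in>Js. \<gamma> j * (real (card K') * ec))"
  proof (rule sum_mono)
    fix j assume "j \<in> Js"
    then show "\<bar>\<gamma> j * sum (c j) K' - \<gamma> j * sum (c' j) K'\<bar> \<le> \<gamma> j * (real (card K') * ec)"
      using abs_sum_diff_le[of K' "c j" "c' j" ec] assms(2,5)
      by (simp add: abs_mult mult_left_mono flip: right_diff_distrib)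
  qed
  also have "\<dots> = real (card K') * ec * (\<Sum>j\<in>Js. \<gamma> j)"
    unfolding sum_distrib_left by (simp add: mult_ac)
  finally have c: "\<bar>(\<Sum>j\<in>Js. \<gamma> j * sum (c j) K') - (\<Sum>j\<in>Js. \<gamma> j * sum (c' j) K')\<bar>
      \<le> real (card K') * ec * (\<Sum>j\<in>Js. \<gamma> j)" .
  show ?thesis using a b c by linarith
qed

lemma sub_optimal_obj_le_replace_slacks:
  assumes opt: "sub_optimal H m J nj F r ch cj \<mu> \<gamma> Y \<alpha> s w d"
    and w': "\<forall>k\<in>{1..H-1}. \<forall>l. 0 \<le> w' k $ l \<and> 0 \<le> (\<Sum>i=1..m. \<alpha> k i *\<^sub>R ch k (Y i k)) $ l + w' k $ l"
    and d': "\<forall>k\<in>{1..H-1}. \<forall>j\<in>{1..J}. \<forall>l<nj j.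
               0 \<le> d' k j l \<and> 0 \<le> (\<Sum>i=1..m. \<alpha> k i * cj j k (Y i k) l) + d' k j l"
  shows "sub_obj H m J nj r \<mu> \<gamma> Y \<alpha> s w d \<le> sub_obj H m J nj r \<mu> \<gamma> Y \<alpha> s w' d'"
proof -
  have "sub_feasible H m J nj F ch cj Y \<alpha> s w' d'"
    using opt w' d' unfolding sub_optimal_def sub_feasible_def by blast
  then show ?thesis using opt unfolding sub_optimal_def by blast
qed

text \<open>The penalties are not assumed to be positive: a negative one would make (P)
  unbounded below, since increasing a slack preserves feasibility.\<close>

lemma sub_optimal_mu_nonneg:
  fixes w :: "nat \<Rightarrow> real^'nh::finite"
  assumes opt: "sub_optimal H m J nj F r ch cj \<mu> \<gamma> Y \<alpha> s w d" and H: "2 \<le> H"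
  shows "0 \<le> \<mu>"
proof -
  define w' where "w' k = w k + (\<chi> l. 1)" for k
  have w: "\<forall>k\<in>{1..H-1}. \<forall>l. 0 \<le> w k $ l \<and> 0 \<le> (\<Sum>i=1..m. \<alpha> k i *\<^sub>R ch k (Y i k)) $ l + w k $ l"
    and d: "\<forall>k\<in>{1..H-1}. \<forall>j\<in>{1..J}. \<forall>l<nj j.
              0 \<le> d k j l \<and> 0 \<le> (\<Sum>i=1..m. \<alpha> k i * cj j k (Y i k) l) + d k j l"
    using opt unfolding sub_optimal_def sub_feasible_def by blast+
  have "sub_obj H m J nj r \<mu> \<gamma> Y \<alpha> s w d \<le> sub_obj H m J nj r \<mu> \<gamma> Y \<alpha> s w' d"
  proof (rule sub_optimal_obj_le_replace_slacks[OF opt _ d])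
    show "\<forall>k\<in>{1..H-1}. \<forall>l. 0 \<le> w' k $ l \<and> 0 \<le> (\<Sum>i=1..m. \<alpha> k i *\<^sub>R ch k (Y i k)) $ l + w' k $ l"
    proof (intro ballI allI)
      fix k l assume "k \<in> {1..H-1}"
      with w have "0 \<le> w k $ l" "0 \<le> (\<Sum>i=1..m. \<alpha> k i *\<^sub>R ch k (Y i k)) $ l + w k $ l"
        by blast+
      then show "0 \<le> w' k $ l \<and> 0 \<le> (\<Sum>i=1..m. \<alpha> k i *\<^sub>R ch k (Y i k)) $ l + w' k $ l"
        unfolding w'_def by simp
    qed
  qed
  moreover have "l1 (w' k) = l1 (w k) + CARD('nh)" if "k \<in> {1..H-1}" for k
    using w that unfolding l1_def w'_def by (simp add: sum.distrib)
  then have "(\<Sum>k=1..H-1. l1 (s k) + l1 (w' k))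
      = (\<Sum>k=1..H-1. l1 (s k) + l1 (w k)) + real (H - 1) * CARD('nh)"
    by (simp add: sum.distrib)
  ultimately have "0 \<le> \<mu> * (real (H - 1) * CARD('nh))"
    unfolding sub_obj_def by (simp add: algebra_simps)
  moreover have "0 < real (H - 1) * CARD('nh)" using H by simp
  ultimately show ?thesis by (metis not_le zero_le_mult_iff)
qed

lemma sub_optimal_gamma_nonneg:
  assumes opt: "sub_optimal H m J nj F r ch cj \<mu> \<gamma> Y \<alpha> s w d" and H: "2 \<le> H"
    and nj: "1 \<le> nj j0" and j0: "j0 \<in> {1..J}"
  shows "0 \<le> \<gamma> j0"
proof -
  define d' where "d' k j l = d k j l + (if j = j0 then 1 else 0)" for k j l
  have w: "\<forall>k\<in>{1..H-1}. \<forall>l. 0 \<le> w k $ l \<and> 0 \<le> (\<Sum>i=1..m. \<alpha> k i *\<^sub>R ch k (Y i k)) $ l + w k $ l"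
    and d: "\<forall>k\<in>{1..H-1}. \<forall>j\<in>{1..J}. \<forall>l<nj j.
              0 \<le> d k j l \<and> 0 \<le> (\<Sum>i=1..m. \<alpha> k i * cj j k (Y i k) l) + d k j l"
    using opt unfolding sub_optimal_def sub_feasible_def by blast+
  have le: "sub_obj H m J nj r \<mu> \<gamma> Y \<alpha> s w d \<le> sub_obj H m J nj r \<mu> \<gamma> Y \<alpha> s w d'"
  proof (rule sub_optimal_obj_le_replace_slacks[OF opt w])
    show "\<forall>k\<in>{1..H-1}. \<forall>j\<in>{1..J}. \<forall>l<nj j.
            0 \<le> d' k j l \<and> 0 \<le> (\<Sum>i=1..m. \<alpha> k i * cj j k (Y i k) l) + d' k j l"
    proof (intro ballI allI impI)
      fix k j l assume "k \<in> {1..H-1}" "j \<in> {1..J}" "l < nj j"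
      with d have "0 \<le> d k j l" "0 \<le> (\<Sum>i=1..m. \<alpha> k i * cj j k (Y i k) l) + d k j l"
        by blast+
      moreover have "0 \<le> (if j = j0 then 1 else 0 :: real)" by simp
      ultimately show "0 \<le> d' k j l \<and> 0 \<le> (\<Sum>i=1..m. \<alpha> k i * cj j k (Y i k) l) + d' k j l"
        unfolding d'_def by linarith
    qed
  qed
  have "(\<Sum>k=1..H-1. \<Sum>l<nj j. \<bar>d' k j l\<bar>)
      = (\<Sum>k=1..H-1. \<Sum>l<nj j. \<bar>d k j l\<bar>) + (if j = j0 then real (H - 1) * nj j else 0)"
    if "j \<in> {1..J}" for j
    using d that unfolding d'_def by (simp add: sum.distrib)
  then have "(\<Sum>j=1..J. \<gamma> j * (\<Sum>k=1..H-1. \<Sum>l<nj j. \<bar>d' k j l\<bar>))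
      = (\<Sum>j=1..J. \<gamma> j * (\<Sum>k=1..H-1. \<Sum>l<nj j. \<bar>d k j l\<bar>)
                   + (if j = j0 then \<gamma> j0 * (real (H - 1) * nj j0) else 0))"
    by (intro sum.cong) (auto simp: distrib_left)
  also have "\<dots> = (\<Sum>j=1..J. \<gamma> j * (\<Sum>k=1..H-1. \<Sum>l<nj j. \<bar>d k j l\<bar>))
                   + \<gamma> j0 * (real (H - 1) * nj j0)"
    using j0 by (simp add: sum.distrib)
  finally have "(\<Sum>j=1..J. \<gamma> j * (\<Sum>k=1..H-1. \<Sum>l<nj j. \<bar>d' k j l\<bar>))
      = (\<Sum>j=1..J. \<gamma> j * (\<Sum>k=1..H-1. \<Sum>l<nj j. \<bar>d k j l\<bar>)) + \<gamma> j0 * (real (H - 1) * nj j0)" .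
  with le have "0 \<le> \<gamma> j0 * (real (H - 1) * nj j0)"
    unfolding sub_obj_def by simp
  moreover have "0 < real (H - 1) * nj j0" using H nj by simp
  ultimately show ?thesis by (metis not_le zero_le_mult_iff)
qed

lemma sub_optimal_obj_eq:
  assumes opt: "sub_optimal H m J nj F r ch cj \<mu> \<gamma> Y \<alpha> s w d" and H: "2 \<le> H"
    and nj: "\<forall>j\<in>{1..J}. 1 \<le> nj j"
  shows "sub_obj H m J nj r \<mu> \<gamma> Y \<alpha> s w d =
     (\<Sum>k=1..H. (norm (\<Sum>i=1..m. \<alpha> k i *\<^sub>R r k (Y i k)))\<^sup>2)
     + \<mu> * (\<Sum>k=1..H-1. l1 (s k) + negl1 (\<Sum>i=1..m. \<alpha> k i *\<^sub>R ch k (Y i k)))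
     + (\<Sum>j=1..J. \<gamma> j * (\<Sum>k=1..H-1. \<Sum>l<nj j. max 0 (- (\<Sum>i=1..m. \<alpha> k i * cj j k (Y i k) l))))"
    (is "_ = ?opt")
proof -
  define w' where "w' k = (\<chi> l. max 0 (- (\<Sum>i=1..m. \<alpha> k i *\<^sub>R ch k (Y i k)) $ l))" for k
  define d' where "d' k j l = max 0 (- (\<Sum>i=1..m. \<alpha> k i * cj j k (Y i k) l))" for k j l
  have w: "\<forall>k\<in>{1..H-1}. \<forall>l. 0 \<le> w k $ l \<and> 0 \<le> (\<Sum>i=1..m. \<alpha> k i *\<^sub>R ch k (Y i k)) $ l + w k $ l"
    and d: "\<forall>k\<in>{1..H-1}. \<forall>j\<in>{1..J}. \<forall>l<nj j.
              0 \<le> d k j l \<and> 0 \<le> (\<Sum>i=1..m. \<alpha> k i * cj j k (Y i k) l) + d k j l"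
    using opt unfolding sub_optimal_def sub_feasible_def by blast+
  have "sub_obj H m J nj r \<mu> \<gamma> Y \<alpha> s w d \<le> sub_obj H m J nj r \<mu> \<gamma> Y \<alpha> s w' d'"
    by (rule sub_optimal_obj_le_replace_slacks[OF opt]) (auto simp: w'_def d'_def)
  also have "\<dots> = ?opt"
    unfolding sub_obj_def w'_def d'_def l1_def negl1_def by simp
  finally have le: "sub_obj H m J nj r \<mu> \<gamma> Y \<alpha> s w d \<le> ?opt" .
  have "l1 (w' k) \<le> l1 (w k)" if "k \<in> {1..H-1}" for k
    unfolding l1_def
  proof (rule sum_mono)
    fix l
    from w that have "0 \<le> w k $ l" "0 \<le> (\<Sum>i=1..m. \<alpha> k i *\<^sub>R ch k (Y i k)) $ l + w k $ l"
      by blast+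
    then show "\<bar>w' k $ l\<bar> \<le> \<bar>w k $ l\<bar>" unfolding w'_def by (simp add: max_def)
  qed
  then have "\<mu> * (\<Sum>k=1..H-1. l1 (s k) + l1 (w' k)) \<le> \<mu> * (\<Sum>k=1..H-1. l1 (s k) + l1 (w k))"
    using sub_optimal_mu_nonneg[OF opt H] by (intro mult_left_mono sum_mono) auto
  moreover have "\<gamma> j * (\<Sum>k=1..H-1. \<Sum>l<nj j. \<bar>d' k j l\<bar>) \<le> \<gamma> j * (\<Sum>k=1..H-1. \<Sum>l<nj j. \<bar>d k j l\<bar>)"
    if "j \<in> {1..J}" for j
    using d that sub_optimal_gamma_nonneg[OF opt H _ that] nj unfolding d'_def
    by (intro mult_left_mono sum_mono) force+
  then have "(\<Sum>j=1..J. \<gamma> j * (\<Sum>k=1..H-1. \<Sum>l<nj j. \<bar>d' k j l\<bar>))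
      \<le> (\<Sum>j=1..J. \<gamma> j * (\<Sum>k=1..H-1. \<Sum>l<nj j. \<bar>d k j l\<bar>))"
    by (rule sum_mono)
  ultimately have "sub_obj H m J nj r \<mu> \<gamma> Y \<alpha> s w' d' \<le> sub_obj H m J nj r \<mu> \<gamma> Y \<alpha> s w d"
    unfolding sub_obj_def by simp
  with le \<open>sub_obj H m J nj r \<mu> \<gamma> Y \<alpha> s w' d' = ?opt\<close> show ?thesis by simp
qed

lemma sub_feasible_weights:
  assumes "sub_feasible H m J nj F ch cj Y \<alpha> s w d" "k \<in> {1..H}"
  shows "\<forall>i\<in>{1..m}. 0 \<le> \<alpha> k i" "sum (\<alpha> k) {1..m} = 1"
  using assms unfolding sub_feasible_def by auto

lemma recover_dist_sample_le:
  assumes feasible: "sub_feasible H m J nj F ch cj Y \<alpha> s w d"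
    and near: "\<forall>i\<in>{1..m}. \<forall>k\<in>{1..H}. dist (z k) (Y i k) \<le> \<Delta>"
  shows "\<forall>i\<in>{1..m}. \<forall>k\<in>{1..H}. dist (recover m Y \<alpha> k) (Y i k) \<le> 2 * \<Delta>"
proof (intro ballI)
  fix i k assume "i \<in> {1..m}" "k \<in> {1..H}"
  then show "dist (recover m Y \<alpha> k) (Y i k) \<le> 2 * \<Delta>"
    unfolding recover_def using sub_feasible_weights[OF feasible] near
    by (intro dist_convex_comb_le[where z = "z k"]) auto
qed

context
  fixes H m J :: nat and nj :: "nat \<Rightarrow> nat"
    and F :: "('nx::finite,'nu::finite) stage \<Rightarrow> real^'nx"
    and ch :: "nat \<Rightarrow> ('nx,'nu) stage \<Rightarrow> real^'nh::finite"
    and cj :: "nat \<Rightarrow> nat \<Rightarrow> ('nx,'nu) stage \<Rightarrow> (nat \<Rightarrow> real)"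
    and Y :: "nat \<Rightarrow> ('nx,'nu) traj" and \<alpha> :: "nat \<Rightarrow> nat \<Rightarrow> real"
    and s :: "nat \<Rightarrow> real^'nx" and w :: "nat \<Rightarrow> real^'nh"
    and d :: "nat \<Rightarrow> nat \<Rightarrow> nat \<Rightarrow> real" and \<delta> :: real
  assumes feasible: "sub_feasible H m J nj F ch cj Y \<alpha> s w d"
    and near: "\<forall>i\<in>{1..m}. \<forall>k\<in>{1..H}. dist (recover m Y \<alpha> k) (Y i k) \<le> \<delta>"
begin

lemma lipschitz_recover_sample_le:
  assumes "k \<in> {1..H}" "0 \<le> L" "\<And>p q. D p q \<le> L * dist p q"
  shows "\<forall>i\<in>{1..m}. D (recover m Y \<alpha> k) (Y i k) \<le> L * \<delta>"
proof
  fix i assume "i \<in> {1..m}"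
  have "D (recover m Y \<alpha> k) (Y i k) \<le> L * dist (recover m Y \<alpha> k) (Y i k)"
    by (rule assms(3))
  also have "\<dots> \<le> L * \<delta>"
    using near assms(1,2) \<open>i \<in> {1..m}\<close> by (intro mult_left_mono) auto
  finally show "D (recover m Y \<alpha> k) (Y i k) \<le> L * \<delta>" .
qed

lemma recover_weights:
  assumes "k \<in> {1..H}"
  shows "finite {1..m}" "\<forall>i\<in>{1..m}. 0 \<le> \<alpha> k i" "sum (\<alpha> k) {1..m} = 1"
  using sub_feasible_weights[OF feasible assms] by simp_all

lemma recover_residual_le:
  assumes k: "k \<in> {1..H}" and g: "L-lipschitz_on UNIV g"
    and R: "norm (g (recover m Y \<alpha> k)) \<le> R" "\<forall>i\<in>{1..m}. norm (g (Y i k)) \<le> R"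
  shows "\<bar>(norm (g (recover m Y \<alpha> k)))\<^sup>2 - (norm (\<Sum>i=1..m. \<alpha> k i *\<^sub>R g (Y i k)))\<^sup>2\<bar>
    \<le> 2 * R * (L * \<delta>)"
proof (rule abs_power2_norm_convex_comb_le[OF recover_weights[OF k] R])
  have "norm (g p - g q) \<le> L * dist p q" for p q
    using lipschitz_onD[OF g] by (simp add: dist_norm)
  then show "\<forall>i\<in>{1..m}. norm (g (recover m Y \<alpha> k) - g (Y i k)) \<le> L * \<delta>"
    by (rule lipschitz_recover_sample_le[OF k lipschitz_on_nonneg[OF g]])
qed

lemma recover_penalty_le:
  assumes k: "k \<in> {1..H-1}"
    and F: "0 \<le> LF" "\<And>p q. l1 (F p - F q) \<le> LF * dist p q"
    and ch: "0 \<le> Lc" "\<And>p q. l1 (ch k p - ch k q) \<le> Lc * dist p q"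
  shows "\<bar>(l1 (fst (recover m Y \<alpha> (k + 1)) - F (recover m Y \<alpha> k)) + negl1 (ch k (recover m Y \<alpha> k)))
          - (l1 (s k) + negl1 (\<Sum>i=1..m. \<alpha> k i *\<^sub>R ch k (Y i k)))\<bar> \<le> LF * \<delta> + Lc * \<delta>"
proof -
  have kH: "k \<in> {1..H}" using k by auto
  have "(\<Sum>i=1..m. \<alpha> k i *\<^sub>R F (Y i k)) = fst (recover m Y \<alpha> (k + 1)) + s k"
    using feasible k unfolding sub_feasible_def recover_def by (simp add: fst_sum)
  then have "\<bar>l1 (fst (recover m Y \<alpha> (k + 1)) - F (recover m Y \<alpha> k)) - l1 (s k)\<bar> \<le> LF * \<delta>"
    using lipschitz_recover_sample_le[OF kH F]
    by (rule abs_l1_defect_convex_comb_le[OF recover_weights[OF kH]])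
  moreover have "\<bar>negl1 (ch k (recover m Y \<alpha> k)) - negl1 (\<Sum>i=1..m. \<alpha> k i *\<^sub>R ch k (Y i k))\<bar> \<le> Lc * \<delta>"
    using lipschitz_recover_sample_le[OF kH ch]
    by (rule abs_negl1_convex_comb_le[OF recover_weights[OF kH]])
  ultimately show ?thesis by linarith
qed

lemma recover_neg_part_sum_le:
  assumes k: "k \<in> {1..H}" and "0 \<le> L" "\<And>p q. (\<Sum>l\<in>Ls. \<bar>c p l - c q l\<bar>) \<le> L * dist p q"
  shows "\<bar>(\<Sum>l\<in>Ls. max 0 (- c (recover m Y \<alpha> k) l))
          - (\<Sum>l\<in>Ls. max 0 (- (\<Sum>i=1..m. \<alpha> k i * c (Y i k) l)))\<bar> \<le> L * \<delta>"
  using lipschitz_recover_sample_le[OF k assms(2,3)]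
  by (rule abs_sum_neg_part_convex_comb_le[OF recover_weights[OF k]])

end

lemma constraint_lipschitz_components:
  fixes J :: nat and nj :: "nat \<Rightarrow> nat"
  assumes lip: "\<forall>k\<in>K. \<forall>p q.
      l1 (ch k p - ch k q) + (\<Sum>j=1..J. \<Sum>l<nj j. \<bar>cj j k p l - cj j k q l\<bar>) \<le> L * dist p q"
    and k: "k \<in> K"
  shows "l1 (ch k p - ch k q) \<le> L * dist p q"
    and "j \<in> {1..J} \<Longrightarrow> (\<Sum>l<nj j. \<bar>cj j k p l - cj j k q l\<bar>) \<le> L * dist p q"
proof -
  have sum: "l1 (ch k p - ch k q) + (\<Sum>j=1..J. \<Sum>l<nj j. \<bar>cj j k p l - cj j k q l\<bar>) \<le> L * dist p q"
    using lip k by blast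
  have "0 \<le> (\<Sum>j=1..J. \<Sum>l<nj j. \<bar>cj j k p l - cj j k q l\<bar>)"
    by (intro sum_nonneg) auto
  with sum show "l1 (ch k p - ch k q) \<le> L * dist p q" by linarith
  assume "j \<in> {1..J}"
  then have "(\<Sum>l<nj j. \<bar>cj j k p l - cj j k q l\<bar>) \<le> (\<Sum>j=1..J. \<Sum>l<nj j. \<bar>cj j k p l - cj j k q l\<bar>)"
    by (intro member_le_sum sum_nonneg) auto
  with sum l1_nonneg[of "ch k p - ch k q"]
  show "(\<Sum>l<nj j. \<bar>cj j k p l - cj j k q l\<bar>) \<le> L * dist p q" by linarith
qed

lemma sub_optimal_recover_phi_approx:
  fixes F :: "('nx::finite,'nu::finite) stage \<Rightarrow> real^'nx"
    and r :: "nat \<Rightarrow> ('nx,'nu) stage \<Rightarrow> real^'nr::finite"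
    and ch :: "nat \<Rightarrow> ('nx,'nu) stage \<Rightarrow> real^'nh::finite"
  assumes opt: "sub_optimal H m J nj F r ch cj \<mu> \<gamma> Y \<alpha> s w d"
    and H: "2 \<le> H" and nj: "\<forall>j\<in>{1..J}. 1 \<le> nj j"
    and Lr: "\<forall>k\<in>{1..H}. Lr-lipschitz_on UNIV (r k)"
    and LF: "0 \<le> LF" "\<forall>p q. l1 (F p - F q) \<le> LF * dist p q"
    and Lc: "0 \<le> Lc" "\<forall>k\<in>{1..H}. \<forall>p q.
        l1 (ch k p - ch k q) + (\<Sum>j=1..J. \<Sum>l<nj j. \<bar>cj j k p l - cj j k q l\<bar>) \<le> Lc * dist p q"
    and R: "\<forall>i\<in>{1..m}. \<forall>k\<in>{1..H}. norm (r k (Y i k)) \<le> R"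
      "\<forall>k\<in>{1..H}. norm (r k (recover m Y \<alpha> k)) \<le> R"
    and near: "\<forall>i\<in>{1..m}. \<forall>k\<in>{1..H}. dist (recover m Y \<alpha> k) (Y i k) \<le> \<delta>"
  shows "\<bar>phi H J nj F r ch cj \<mu> \<gamma> (recover m Y \<alpha>) - sub_obj H m J nj r \<mu> \<gamma> Y \<alpha> s w d\<bar>
    \<le> real H * (2 * R * (Lr * \<delta>)) + \<mu> * (real (H - 1) * (LF * \<delta> + Lc * \<delta>))
       + real (H - 1) * (Lc * \<delta>) * (\<Sum>j=1..J. \<gamma> j)"
proof -
  let ?p = "recover m Y \<alpha>"
  have feasible: "sub_feasible H m J nj F ch cj Y \<alpha> s w d"
    using opt unfolding sub_optimal_def by blast
  note c_lip = constraint_lipschitz_components[OF Lc(2)]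
  have "0 \<le> \<mu>" "\<forall>j\<in>{1..J}. 0 \<le> \<gamma> j"
    using sub_optimal_mu_nonneg[OF opt H] sub_optimal_gamma_nonneg[OF opt H] nj by auto
  moreover have residual: "\<forall>k\<in>{1..H}. \<bar>(norm (r k (?p k)))\<^sup>2 - (norm (\<Sum>i=1..m. \<alpha> k i *\<^sub>R r k (Y i k)))\<^sup>2\<bar>
      \<le> 2 * R * (Lr * \<delta>)"
  proof
    fix k assume k: "k \<in> {1..H}"
    show "\<bar>(norm (r k (?p k)))\<^sup>2 - (norm (\<Sum>i=1..m. \<alpha> k i *\<^sub>R r k (Y i k)))\<^sup>2\<bar>
      \<le> 2 * R * (Lr * \<delta>)"
      using Lr R k by (intro recover_residual_le[OF feasible near k]) auto
  qed
  moreover have penalty: "\<forall>k\<in>{1..H-1}.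
      \<bar>(l1 (fst (?p (k + 1)) - F (?p k)) + negl1 (ch k (?p k)))
       - (l1 (s k) + negl1 (\<Sum>i=1..m. \<alpha> k i *\<^sub>R ch k (Y i k)))\<bar> \<le> LF * \<delta> + Lc * \<delta>"
  proof
    fix k assume k: "k \<in> {1..H-1}"
    then have "k \<in> {1..H}" by auto
    from recover_penalty_le[OF feasible near k LF(1) LF(2)[rule_format] Lc(1) c_lip(1)[OF this]]
    show "\<bar>(l1 (fst (?p (k + 1)) - F (?p k)) + negl1 (ch k (?p k)))
       - (l1 (s k) + negl1 (\<Sum>i=1..m. \<alpha> k i *\<^sub>R ch k (Y i k)))\<bar> \<le> LF * \<delta> + Lc * \<delta>" .
  qed
  moreover have soft: "\<forall>j\<in>{1..J}. \<forall>k\<in>{1..H-1}.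
      \<bar>(\<Sum>l<nj j. max 0 (- cj j k (?p k) l))
       - (\<Sum>l<nj j. max 0 (- (\<Sum>i=1..m. \<alpha> k i * cj j k (Y i k) l)))\<bar> \<le> Lc * \<delta>"
  proof (intro ballI)
    fix j k assume "j \<in> {1..J}" "k \<in> {1..H-1}"
    then have "k \<in> {1..H}" by auto
    from recover_neg_part_sum_le[OF feasible near this Lc(1) c_lip(2)[OF this \<open>j \<in> {1..J}\<close>]]
    show "\<bar>(\<Sum>l<nj j. max 0 (- cj j k (?p k) l))
       - (\<Sum>l<nj j. max 0 (- (\<Sum>i=1..m. \<alpha> k i * cj j k (Y i k) l)))\<bar> \<le> Lc * \<delta>" .
  qed
  ultimately have "\<bar>phi H J nj F r ch cj \<mu> \<gamma> ?p - sub_obj H m J nj r \<mu> \<gamma> Y \<alpha> s w d\<bar>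
    \<le> real (card {1..H}) * (2 * R * (Lr * \<delta>)) + \<mu> * (real (card {1..H-1}) * (LF * \<delta> + Lc * \<delta>))
       + real (card {1..H-1}) * (Lc * \<delta>) * (\<Sum>j=1..J. \<gamma> j)"
    unfolding phi_def sub_optimal_obj_eq[OF opt H nj] by (rule abs_penalty_sum_diff_le)
  then show ?thesis by simp
qed

theorem mainTheorem3:
  fixes H m J :: nat and nj :: "nat \<Rightarrow> nat"
    and F :: "('nx::finite,'nu::finite) stage \<Rightarrow> real^'nx"
    and r :: "nat \<Rightarrow> ('nx,'nu) stage \<Rightarrow> real^'nr::finite"
    and ch :: "nat \<Rightarrow> ('nx,'nu) stage \<Rightarrow> real^'nh::finite"
    and cj :: "nat \<Rightarrow> nat \<Rightarrow> ('nx,'nu) stage \<Rightarrow> (nat \<Rightarrow> real)"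
    and z0 :: "('nx,'nu) traj" and \<Delta>0 \<mu>0 :: real and \<gamma>0 :: "nat \<Rightarrow> real"
    and \<beta>exp \<beta>con \<Delta>min \<Delta>max \<tau>feas \<tau>viol \<rho>\<mu> \<rho>\<gamma> \<mu>max :: real
    and \<tau> \<gamma>max :: "nat \<Rightarrow> real"
    and Lr LF Lc R \<kappa> :: real
    and zs :: "nat \<Rightarrow> ('nx,'nu) traj" and \<Delta>s \<mu>s :: "nat \<Rightarrow> real"
    and \<gamma>s :: "nat \<Rightarrow> nat \<Rightarrow> real" and Ys :: "nat \<Rightarrow> nat \<Rightarrow> ('nx,'nu) traj"
    and \<alpha>s :: "nat \<Rightarrow> nat \<Rightarrow> nat \<Rightarrow> real" and ss :: "nat \<Rightarrow> nat \<Rightarrow> real^'nx"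
    and ws :: "nat \<Rightarrow> nat \<Rightarrow> real^'nh" and ds :: "nat \<Rightarrow> nat \<Rightarrow> nat \<Rightarrow> nat \<Rightarrow> real"
  assumes H: "2 \<le> H" and m: "1 \<le> m" and nj: "\<forall>j\<in>{1..J}. 1 \<le> nj j"
    and params: "1 < \<beta>exp" "0 < \<beta>con" "\<beta>con < 1" "0 < \<Delta>min" "\<Delta>min \<le> \<Delta>max"
      "0 < \<tau>feas" "\<tau>feas < \<tau>viol" "\<forall>j\<in>{1..J}. 0 < \<tau> j" "1 < \<rho>\<mu>" "1 < \<rho>\<gamma>"
    and init: "0 < \<Delta>0" "0 < \<mu>0" "\<forall>j\<in>{1..J}. 0 < \<gamma>0 j"
    \<comment> \<open>(A1) Lipschitz continuity\<close>
    and A1_r: "\<forall>k\<in>{1..H}. Lr-lipschitz_on UNIV (r k)"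
    and A1_F: "0 \<le> LF" "\<forall>p q. l1 (F p - F q) \<le> LF * dist p q"
    and A1_c: "0 \<le> Lc" "\<forall>k\<in>{1..H}. \<forall>p q.
        l1 (ch k p - ch k q) + (\<Sum>j=1..J. \<Sum>l<nj j. \<bar>cj j k p l - cj j k q l\<bar>) \<le> Lc * dist p q"
    \<comment> \<open>(A2) compact level sets with bounded residuals\<close>
    and A2: "\<forall>\<mu> \<gamma>. 0 < \<mu> \<and> \<mu> \<le> \<mu>max \<and> (\<forall>j\<in>{1..J}. 0 < \<gamma> j \<and> \<gamma> j \<le> \<gamma>max j) \<longrightarrow>
        (let Lset = {z. (\<forall>k. k \<notin> {1..H} \<longrightarrow> z k = 0) \<and>
                         phi H J nj F r ch cj \<mu> \<gamma> z \<le> phi H J nj F r ch cj \<mu> \<gamma> z0}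
         in compact Lset \<and> (\<forall>z\<in>Lset. \<forall>k\<in>{1..H}. norm (r k (z k)) \<le> R))"
    \<comment> \<open>(A2) the bound R is used for all residuals evaluated in the analysis\<close>
    and A2_R: "\<forall>t. \<forall>i\<in>{1..m}. \<forall>k\<in>{1..H}. norm (r k (Ys t i k)) \<le> R"
              "\<forall>t. \<forall>k\<in>{1..H}. norm (r k (zs (Suc t) k)) \<le> R"
    \<comment> \<open>(A3) sampling conditions\<close>
    and \<kappa>: "0 < \<kappa>"
    and A3: "\<forall>t. (\<forall>i\<in>{1..m}. traj_norm H (\<lambda>k. Ys t i k - zs t k) \<le> \<Delta>s t) \<and>
                (\<exists>i\<in>{1..m}. \<forall>k\<in>{1..H}. Ys t i k = zs t k) \<and>
                (\<forall>dd. traj_norm H dd = 1 \<longrightarrow>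
                   (\<exists>i\<in>{1..m}. \<kappa> * \<Delta>s t \<le> traj_inner H (\<lambda>k. Ys t i k - zs t k) dd))"
    and run: "atbm_run H m J nj F r ch cj z0 \<Delta>0 \<mu>0 \<gamma>0
                \<beta>exp \<beta>con \<Delta>min \<Delta>max \<tau>feas \<tau>viol \<tau> \<rho>\<mu> \<rho>\<gamma> \<mu>max \<gamma>max
                zs \<Delta>s \<mu>s \<gamma>s Ys \<alpha>s ss ws ds"
  shows "\<forall>t. \<bar>phi H J nj F r ch cj (\<mu>s t) (\<gamma>s t) (zs (Suc t))
              - sub_obj H m J nj r (\<mu>s t) (\<gamma>s t) (Ys t) (\<alpha>s t) (ss t) (ws t) (ds t)\<bar>
           \<le> 2 * (2 * real H * R * Lr + real (H - 1) * \<mu>s t * (1 + LF + Lc)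
                  + real (H - 1) * Lc * (\<Sum>j=1..J. \<gamma>s t j)) * \<Delta>s t"
proof (intro allI)
  fix t
  have opt: "sub_optimal H m J nj F r ch cj (\<mu>s t) (\<gamma>s t) (Ys t) (\<alpha>s t) (ss t) (ws t) (ds t)"
    and step: "zs (Suc t) = recover m (Ys t) (\<alpha>s t)"
    using run unfolding atbm_run_def by blast+
  have sample_near: "\<forall>i\<in>{1..m}. \<forall>k\<in>{1..H}. dist (zs t k) (Ys t i k) \<le> \<Delta>s t"
    using A3 dist_le_traj_norm[of _ H "zs t"] by (meson order.trans)
  with m H have "dist (zs t 1) (Ys t 1 1) \<le> \<Delta>s t" by simp
  then have "0 \<le> \<Delta>s t" by (rule order.trans[OF zero_le_dist])
  then have slack: "0 \<le> 2 * real (H - 1) * \<mu>s t * \<Delta>s t"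
    using sub_optimal_mu_nonneg[OF opt H] by simp
  have feasible: "sub_feasible H m J nj F ch cj (Ys t) (\<alpha>s t) (ss t) (ws t) (ds t)"
    using opt unfolding sub_optimal_def by blast
  have "\<forall>i\<in>{1..m}. \<forall>k\<in>{1..H}. norm (r k (Ys t i k)) \<le> R"
    "\<forall>k\<in>{1..H}. norm (r k (recover m (Ys t) (\<alpha>s t) k)) \<le> R"
    using A2_R unfolding step[symmetric] by blast+
  with sub_optimal_recover_phi_approx[OF opt H nj A1_r A1_F A1_c this
      recover_dist_sample_le[OF feasible sample_near]] slack
  show "\<bar>phi H J nj F r ch cj (\<mu>s t) (\<gamma>s t) (zs (Suc t))
              - sub_obj H m J nj r (\<mu>s t) (\<gamma>s t) (Ys t) (\<alpha>s t) (ss t) (ws t) (ds t)\<bar>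
           \<le> 2 * (2 * real H * R * Lr + real (H - 1) * \<mu>s t * (1 + LF + Lc)
                  + real (H - 1) * Lc * (\<Sum>j=1..J. \<gamma>s t j)) * \<Delta>s t"
    unfolding step by (simp add: algebra_simps)
qed

end
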